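(* Let $f_\theta$ be a model. For every $f^*\in\mathcal F$, $O_{f_\theta}(f^* )=\operatorname{rank}_{f_\theta}(f^* )$.
   Context: A model is a map $f:\mathbb R^d\times\mathbb R^M\to\mathbb R$, $(x,\theta)\mapsto f(x;\theta)=f_\theta(x)$, differentiable in both $x$ and $\theta$; its function space is $\mathcal F=\{f_\theta:\theta\in\mathbb R^M\}$. The loss $\ell:\mathbb R\times\mathbb R\to[0,\infty)$ is continuously differentiable with $\ell(u,v)=0$ iff $u=v$. For $f^*\in\mathcal F$, the target set is $\mathcal M_{f^*}=\{\theta: f_\theta=f^*\}$. A dataset from $f^*$ of size $n$ is $S=\{(x_i,f^*(x_i))\}_{i=1}^n$; the empirical loss of $g:\mathbb R^d\to\mathbb R$ is $\frac1n\sum_{i=1}^n\ell(g(x_i),f^*(x_i))$ (identically $0$ if $n=0$). The tangent function hyperplane at $\theta'$ is $\widetilde{\mathcal T}_{\theta'}=\{f(\cdot;\theta')+a^\top\nabla_\theta f(\cdot;\theta'):a\in\mathbb R^M\}$. $f^*$ has LLR-guarantee at $\theta'\in\mathcal M_{f^*}$ from $S$ if the set of minimizers of the empirical loss over $\widetilde{\mathcal T}_{\theta'}$ is exactly $\{f^*\}$; $f^*$ has $n$-sample LLR-guarantee if there exist a dataset $S$ from $f^*$ of size $n$ and $\theta'\in\mathcal M_{f^*}$ such that $f^*$ has LLR-guarantee at $\theta'$ from $S$. The optimistic sample size $O_{f_\theta}(f^* )$ is the smallest $n\geq 0$ such that $f^*$ has $n$-sample LLR-guarantee. The model rank at $\theta$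 is $\operatorname{rank}_{f_\theta}(\theta)=\dim\operatorname{span}\{\partial_{\theta_i}f(\cdot;\theta)\}_{i=1}^M$, and the model rank of $f^*$ is $\operatorname{rank}_{f_\theta}(f^* )=\min_{\theta'\in\mathcal M_{f^*}}\operatorname{rank}_{f_\theta}(\theta')$. *)

theory Defs
  imports "HOL-Analysis.Analysis" "HOL-Library.Function_Algebras"
begin

text \<open>A model is f :: real^'d => real^'m => real, written f x theta.
  The index types 'd and 'm are finite, so x in R^d with d = CARD('d) and
  theta in R^M with M = CARD('m).\<close>

type_synonym ('d, 'm) model = "real^'d \<Rightarrow> real^'m \<Rightarrow> real"

definition is_model :: "('d::finite, 'm::finite) model \<Rightarrow> bool" where
  "is_model f \<longleftrightarrow>
     (\<forall>\<theta> x. (\<lambda>y. f y \<theta>) differentiable (at x)) \<and>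
     (\<forall>x \<theta>. (\<lambda>t. f x t) differentiable (at \<theta>))"

definition is_loss :: "(real \<Rightarrow> real \<Rightarrow> real) \<Rightarrow> bool" where
  "is_loss l \<longleftrightarrow>
     (\<forall>u v. 0 \<le> l u v) \<and>
     (\<forall>u v. l u v = 0 \<longleftrightarrow> u = v) \<and>
     (\<exists>D1 D2. continuous_on UNIV D1 \<and> continuous_on UNIV D2 \<and>
        (\<forall>p. ((\<lambda>q. l (fst q) (snd q)) has_derivative
               (\<lambda>h. D1 p * fst h + D2 p * snd h)) (at p)))"

definition fun_space :: "('d::finite, 'm::finite) model \<Rightarrow> (real^'d \<Rightarrow> real) set" where
  "fun_space f = {(\<lambda>x. f x \<theta>) | \<theta>. True}"

definition target_set :: "('d::finite, 'm::finite) model \<Rightarrow> (real^'d \<Rightarrow> real) \<Rightarrow> (real^'m) set" where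
  "target_set f fstar = {\<theta>. (\<lambda>x. f x \<theta>) = fstar}"

definition param_partial :: "('d::finite, 'm::finite) model \<Rightarrow> real^'m \<Rightarrow> 'm \<Rightarrow> (real^'d \<Rightarrow> real)" where
  "param_partial f \<theta> i = (\<lambda>x. frechet_derivative (\<lambda>t. f x t) (at \<theta>) (axis i 1))"

text \<open>Empirical loss of g on the dataset {(x_i, fstar x_i)}, i = 1..n, given by
  the list xs of inputs (n = length xs); identically 0 if n = 0.\<close>
definition emp_loss :: "(real \<Rightarrow> real \<Rightarrow> real) \<Rightarrow> (real^'d \<Rightarrow> real) \<Rightarrow> (real^'d) list
                        \<Rightarrow> (real^'d \<Rightarrow> real) \<Rightarrow> real" where
  "emp_loss l fstar xs g =
     (if xs = [] then 0 else (\<Sum>x\<leftarrow>xs. l (g x) (fstar x)) / real (length xs))"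

definition tangent_hyperplane :: "('d::finite, 'm::finite) model \<Rightarrow> real^'m \<Rightarrow> (real^'d \<Rightarrow> real) set" where
  "tangent_hyperplane f \<theta>' =
     {(\<lambda>x. f x \<theta>' + (\<Sum>i\<in>UNIV. a $ i * param_partial f \<theta>' i x)) | a. True}"

definition LLR_guarantee :: "('d::finite, 'm::finite) model \<Rightarrow> (real \<Rightarrow> real \<Rightarrow> real)
      \<Rightarrow> (real^'d \<Rightarrow> real) \<Rightarrow> real^'m \<Rightarrow> (real^'d) list \<Rightarrow> bool" where
  "LLR_guarantee f l fstar \<theta>' xs \<longleftrightarrow>
     {g \<in> tangent_hyperplane f \<theta>'. \<forall>h \<in> tangent_hyperplane f \<theta>'.
         emp_loss l fstar xs g \<le> emp_loss l fstar xs h} = {fstar}"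

definition n_sample_LLR :: "('d::finite, 'm::finite) model \<Rightarrow> (real \<Rightarrow> real \<Rightarrow> real)
      \<Rightarrow> (real^'d \<Rightarrow> real) \<Rightarrow> nat \<Rightarrow> bool" where
  "n_sample_LLR f l fstar n \<longleftrightarrow>
     (\<exists>xs \<theta>'. length xs = n \<and> \<theta>' \<in> target_set f fstar \<and> LLR_guarantee f l fstar \<theta>' xs)"

definition optimistic_sample_size :: "('d::finite, 'm::finite) model \<Rightarrow> (real \<Rightarrow> real \<Rightarrow> real)
      \<Rightarrow> (real^'d \<Rightarrow> real) \<Rightarrow> nat" where
  "optimistic_sample_size f l fstar = (LEAST n. n_sample_LLR f l fstar n)"

definition model_rank_at :: "('d::finite, 'm::finite) model \<Rightarrow> real^'m \<Rightarrow> nat" where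
  "model_rank_at f \<theta> =
     vector_space.dim (\<lambda>(c::real) (g::real^'d \<Rightarrow> real). (\<lambda>x. c * g x))
       (range (param_partial f \<theta>))"

definition model_rank :: "('d::finite, 'm::finite) model \<Rightarrow> (real^'d \<Rightarrow> real) \<Rightarrow> nat" where
  "model_rank f fstar = (LEAST r. \<exists>\<theta>' \<in> target_set f fstar. model_rank_at f \<theta>' = r)"

end

theory Submission
  imports Defs
begin

text \<open>Since f* = f(.; \<theta>') lies in the tangent hyperplane at any \<theta>' of the target set,
  that hyperplane is f* + V with V the span of the partial derivatives at \<theta>', and the
  empirical loss vanishes exactly on the functions interpolating f* at the sample points.
  Hence the LLR-guarantee at \<theta>' from a sample means that the only element of V vanishing
  at all sample points is 0. Such a sample needs at least dim V points, since evaluation at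
  the points is then injective on V; and dim V points suffice, choosing one point at a time
  at which some nonzero element of V does not vanish, which cuts the dimension by one.
  Minimising over \<theta>' gives O(f*) = rank(f*).\<close>

abbreviation scale_fun :: "real \<Rightarrow> ('a \<Rightarrow> real) \<Rightarrow> 'a \<Rightarrow> real" where
  "scale_fun \<equiv> \<lambda>c g x. c * g x"

interpretation fun_vs: vector_space scale_fun
  by unfold_locales (auto simp: fun_eq_iff algebra_simps)

lemma sum_fun_apply: "sum g A x = (\<Sum>a\<in>A. g a x)"
  by (induction A rule: infinite_finite_induct) auto

definition unisolvent :: "('a \<Rightarrow> real) set \<Rightarrow> 'a list \<Rightarrow> bool" where
  "unisolvent V xs \<longleftrightarrow> (\<forall>v\<in>V. (\<forall>x\<in>set xs. v x = 0) \<longrightarrow> v = 0)"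

lemma unisolvent_length_ge_dim:
  assumes "unisolvent (fun_vs.span T) xs"
  shows "fun_vs.dim T \<le> length xs"
proof -
  obtain B where B: "B \<subseteq> fun_vs.span T" "fun_vs.independent B" "fun_vs.span T \<subseteq> fun_vs.span B"
      "card B = fun_vs.dim (fun_vs.span T)"
    using fun_vs.basis_exists by blast
  define restrict where "restrict v = (\<lambda>x. if x \<in> set xs then v x else 0)" for v :: "'a \<Rightarrow> real"
  define ind where "ind p = (\<lambda>x. if x = p then 1 else 0 :: real)" for p :: 'a
  have hom: "module_hom scale_fun scale_fun restrict"
    by unfold_locales (auto simp: restrict_def fun_eq_iff)
  have inj: "inj_on restrict (fun_vs.span T)"
  proof (rule inj_onI)
    fix u w assume uw: "u \<in> fun_vs.span T" "w \<in> fun_vs.span T" "restrict u = restrict w"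
    have "u - w \<in> fun_vs.span T" using uw by (intro fun_vs.span_diff)
    moreover have "\<forall>x\<in>set xs. (u - w) x = 0"
      using uw(3) by (auto simp: restrict_def fun_eq_iff split: if_splits)
    ultimately show "u = w" using assms unfolding unisolvent_def by auto
  qed
  have inj_B: "inj_on restrict B"
    using inj B(1) by (rule inj_on_subset)
  have "fun_vs.span B = fun_vs.span T"
    using B(1,3) fun_vs.span_minimal[OF B(1) fun_vs.subspace_span] by blast
  then have "fun_vs.independent (restrict ` B)"
    using module_hom.independent_injective_image[OF hom B(2)] inj by simp
  moreover have "restrict ` B \<subseteq> fun_vs.span (ind ` set xs)"
  proof
    fix w assume "w \<in> restrict ` B"
    then obtain v where w: "w = restrict v" by blast
    have "restrict v = (\<Sum>p\<in>set xs. scale_fun (v p) (ind p))"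
    proof
      fix x
      have "(\<Sum>p\<in>set xs. scale_fun (v p) (ind p)) x = (\<Sum>p\<in>set xs. if p = x then v x else 0)"
        unfolding sum_fun_apply by (rule sum.cong) (auto simp: ind_def)
      then show "restrict v x = (\<Sum>p\<in>set xs. scale_fun (v p) (ind p)) x"
        by (simp add: restrict_def)
    qed
    also have "\<dots> \<in> fun_vs.span (ind ` set xs)"
      by (intro fun_vs.span_sum fun_vs.span_scale fun_vs.span_base) auto
    finally show "w \<in> fun_vs.span (ind ` set xs)"
      unfolding w .
  qed
  ultimately have "card (restrict ` B) \<le> card (ind ` set xs)"
    by (auto dest: fun_vs.independent_span_bound[rotated])
  also have "\<dots> \<le> length xs"
    using card_image_le card_length le_trans by blast
  finally show ?thesis
    using B(4) card_image[OF inj_B] by simp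
qed

lemma vanishing_part_smaller_dim:
  assumes "finite T" "v \<in> fun_vs.span T" "v x \<noteq> 0"
  obtains B where "finite B" "fun_vs.dim B < fun_vs.dim T"
    "{u \<in> fun_vs.span T. u x = 0} \<subseteq> fun_vs.span B"
proof -
  define S where "S = {u \<in> fun_vs.span T. u x = 0}"
  have "fun_vs.subspace S"
    unfolding fun_vs.subspace_def S_def
    by (auto intro: fun_vs.span_zero fun_vs.span_add fun_vs.span_scale)
  obtain B where B: "B \<subseteq> S" "fun_vs.independent B" "S \<subseteq> fun_vs.span B"
    using fun_vs.maximal_independent_subset[of S] by blast
  have "fun_vs.span B \<subseteq> S"
    using B(1) \<open>fun_vs.subspace S\<close> fun_vs.span_minimal by blast
  then have v_notin: "v \<notin> fun_vs.span B"
    using assms(3) unfolding S_def by blast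
  then have indep: "fun_vs.independent (insert v B)"
    using B(2) by (rule fun_vs.independent_insertI)
  have sub: "insert v B \<subseteq> fun_vs.span T"
    using B(1) assms(2) unfolding S_def by blast
  have "finite B"
    using fun_vs.independent_span_bound[OF assms(1) indep sub] by simp
  moreover have "card (insert v B) \<le> fun_vs.dim T"
  proof -
    obtain C where C: "C \<subseteq> fun_vs.span T" "fun_vs.independent C"
        "fun_vs.span T \<subseteq> fun_vs.span C" "card C = fun_vs.dim T"
      using fun_vs.basis_exists[of "fun_vs.span T"] by auto
    then have "finite C"
      using fun_vs.independent_span_bound[OF assms(1)] by blast
    then show ?thesis
      using fun_vs.independent_span_bound[OF _ indep] sub C(3,4) by fastforce
  qed
  moreover have "v \<notin> B"
    using v_notin fun_vs.span_base by blast
  ultimately show thesis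
    using that[of B] B(2,3) fun_vs.dim_eq_card_independent[OF B(2)] unfolding S_def by simp
qed

lemma unisolvent_exists:
  assumes "finite T" "fun_vs.dim T \<le> n"
  shows "\<exists>xs. length xs = n \<and> unisolvent (fun_vs.span T) xs"
  using assms
proof (induction n arbitrary: T)
  case 0
  have "\<forall>v\<in>fun_vs.span T. v = 0"
  proof (rule ccontr)
    assume "\<not> (\<forall>v\<in>fun_vs.span T. v = 0)"
    then obtain v x where v: "v \<in> fun_vs.span T" "v x \<noteq> 0"
      by (auto simp: fun_eq_iff)
    obtain B where "finite B" "fun_vs.dim B < fun_vs.dim T"
      "{u \<in> fun_vs.span T. u x = 0} \<subseteq> fun_vs.span B"
      using vanishing_part_smaller_dim[OF "0.prems"(1) v] .
    with "0.prems"(2) show False by simp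
  qed
  then show ?case
    by (simp add: unisolvent_def)
next
  case (Suc n)
  show ?case
  proof (cases "\<forall>v\<in>fun_vs.span T. v = 0")
    case True
    then show ?thesis
      by (intro exI[of _ "replicate (Suc n) undefined"]) (simp add: unisolvent_def)
  next
    case False
    then obtain v x where v: "v \<in> fun_vs.span T" "v x \<noteq> 0"
      by (auto simp: fun_eq_iff)
    obtain B where "finite B" "fun_vs.dim B < fun_vs.dim T"
      and vanishing: "{u \<in> fun_vs.span T. u x = 0} \<subseteq> fun_vs.span B"
      using vanishing_part_smaller_dim[OF Suc.prems(1) v] .
    then obtain ys where ys: "length ys = n" "unisolvent (fun_vs.span B) ys"
      using Suc.IH Suc.prems(2) by force
    have "unisolvent (fun_vs.span T) (x # ys)"
      using ys(2) vanishing unfolding unisolvent_def by auto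
    then show ?thesis
      using ys(1) by (intro exI[of _ "x # ys"]) simp
  qed
qed

lemma span_range_eq_lincombs:
  fixes P :: "'i::finite \<Rightarrow> 'a \<Rightarrow> real"
  shows "fun_vs.span (range P) = range (\<lambda>a x. \<Sum>i\<in>UNIV. a $ i * P i x)"
proof
  define lc where "lc a = (\<lambda>x. \<Sum>i\<in>UNIV. a $ i * P i x)" for a :: "real^'i"
  have "P j = lc (axis j 1)" for j
    by (simp add: lc_def fun_eq_iff axis_def of_bool_def[symmetric])
  then have "range P \<subseteq> range lc" by blast
  moreover have "fun_vs.subspace (range lc)"
    unfolding fun_vs.subspace_def
  proof (intro conjI ballI allI)
    have "0 = lc 0" "\<And>a b. lc a + lc b = lc (a + b)" "\<And>c a. scale_fun c (lc a) = lc (c *\<^sub>R a)"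
      by (simp_all add: lc_def fun_eq_iff algebra_simps sum.distrib sum_distrib_left)
    then show "0 \<in> range lc" "\<And>u w. u \<in> range lc \<Longrightarrow> w \<in> range lc \<Longrightarrow> u + w \<in> range lc"
      "\<And>c u. u \<in> range lc \<Longrightarrow> scale_fun c u \<in> range lc"
      by auto
  qed
  ultimately show "fun_vs.span (range P) \<subseteq> range lc"
    by (rule fun_vs.span_minimal)
  have "lc a \<in> fun_vs.span (range P)" for a
  proof -
    have "lc a = (\<Sum>i\<in>UNIV. scale_fun (a $ i) (P i))"
      by (simp add: lc_def fun_eq_iff sum_fun_apply)
    also have "\<dots> \<in> fun_vs.span (range P)"
      by (intro fun_vs.span_sum fun_vs.span_scale fun_vs.span_base) auto
    finally show ?thesis .
  qed
  then show "range lc \<subseteq> fun_vs.span (range P)" by blast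
qed

lemma tangent_hyperplane_eq:
  assumes "\<theta>' \<in> target_set f fstar"
  shows "tangent_hyperplane f \<theta>' = (\<lambda>v. fstar + v) ` fun_vs.span (range (param_partial f \<theta>'))"
proof -
  have "\<And>x. f x \<theta>' = fstar x"
    using assms unfolding target_set_def by auto
  then show ?thesis
    unfolding tangent_hyperplane_def span_range_eq_lincombs by (auto simp: plus_fun_def)
qed

lemma emp_loss_nonneg:
  assumes "is_loss l"
  shows "0 \<le> emp_loss l fstar xs g"
  using assms unfolding emp_loss_def is_loss_def
  by (auto intro!: divide_nonneg_nonneg sum_list_nonneg)

lemma emp_loss_eq_0_iff:
  assumes "is_loss l"
  shows "emp_loss l fstar xs g = 0 \<longleftrightarrow> (\<forall>x\<in>set xs. g x = fstar x)"
proof (cases "xs = []")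
  case False
  have nonneg: "\<And>u v. 0 \<le> l u v" and zero: "\<And>u v. l u v = 0 \<longleftrightarrow> u = v"
    using assms unfolding is_loss_def by auto
  have "(\<Sum>x\<leftarrow>xs. l (g x) (fstar x)) = 0 \<longleftrightarrow> (\<forall>y\<in>set (map (\<lambda>x. l (g x) (fstar x)) xs). y = 0)"
    by (rule sum_list_nonneg_eq_0_iff) (auto simp: nonneg)
  then show ?thesis
    using False by (simp add: emp_loss_def zero)
qed (simp add: emp_loss_def)

lemma emp_loss_minimizers:
  assumes "is_loss l" "fstar \<in> G"
  shows "{g \<in> G. \<forall>h\<in>G. emp_loss l fstar xs g \<le> emp_loss l fstar xs h}
       = {g \<in> G. \<forall>x\<in>set xs. g x = fstar x}"
proof -
  have "emp_loss l fstar xs fstar = 0"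
    by (simp add: emp_loss_eq_0_iff[OF assms(1)])
  then have "(\<forall>h\<in>G. emp_loss l fstar xs g \<le> emp_loss l fstar xs h) \<longleftrightarrow> emp_loss l fstar xs g = 0"
    for g
    using assms(2) emp_loss_nonneg[OF assms(1)] by (metis order.antisym)
  then show ?thesis
    using emp_loss_eq_0_iff[OF assms(1)] by blast
qed

lemma translate_interpolants_eq_singleton_iff:
  fixes c :: "'a \<Rightarrow> real"
  assumes "0 \<in> V"
  shows "{g \<in> (\<lambda>v. c + v) ` V. \<forall>x\<in>set xs. g x = c x} = {c} \<longleftrightarrow> unisolvent V xs"
proof -
  have "{g \<in> (\<lambda>v. c + v) ` V. \<forall>x\<in>set xs. g x = c x} = (\<lambda>v. c + v) ` {v \<in> V. \<forall>x\<in>set xs. v x = 0}"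
    by auto
  moreover have "(\<lambda>v. c + v) ` W = {c} \<longleftrightarrow> W = {0}" for W
    by (metis (no_types, lifting) add.right_neutral add_left_imp_eq image_empty image_insert
        image_is_empty inj_on_def inj_on_image_eq_iff subset_UNIV)
  ultimately show ?thesis
    using assms unfolding unisolvent_def by auto
qed

lemma LLR_guarantee_iff_unisolvent:
  assumes "is_loss l" "\<theta>' \<in> target_set f fstar"
  shows "LLR_guarantee f l fstar \<theta>' xs \<longleftrightarrow> unisolvent (fun_vs.span (range (param_partial f \<theta>'))) xs"
proof -
  have fstar_tangent: "fstar \<in> tangent_hyperplane f \<theta>'"
    unfolding tangent_hyperplane_eq[OF assms(2)] using fun_vs.span_zero by force
  show ?thesis
    unfolding LLR_guarantee_def emp_loss_minimizers[OF assms(1) fstar_tangent]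
    unfolding tangent_hyperplane_eq[OF assms(2)]
    by (intro translate_interpolants_eq_singleton_iff fun_vs.span_zero)
qed

lemma n_sample_LLR_iff:
  assumes "is_loss l"
  shows "n_sample_LLR f l fstar n \<longleftrightarrow> (\<exists>\<theta>'\<in>target_set f fstar. model_rank_at f \<theta>' \<le> n)"
proof -
  have "(\<exists>xs. length xs = n \<and> LLR_guarantee f l fstar \<theta>' xs) \<longleftrightarrow> model_rank_at f \<theta>' \<le> n"
    if "\<theta>' \<in> target_set f fstar" for \<theta>'
    unfolding LLR_guarantee_iff_unisolvent[OF assms that] model_rank_at_def
    using unisolvent_length_ge_dim unisolvent_exists[of "range (param_partial f \<theta>')"] by auto
  then show ?thesis
    unfolding n_sample_LLR_def by blast
qed

theorem mainTheorem4:
  fixes f :: "('d::finite, 'm::finite) model"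
    and l :: "real \<Rightarrow> real \<Rightarrow> real"
    and fstar :: "real^'d \<Rightarrow> real"
  assumes "is_model f"
    and "is_loss l"
    and "fstar \<in> fun_space f"
  shows "(\<exists>n. n_sample_LLR f l fstar n) \<and>
         optimistic_sample_size f l fstar = model_rank f fstar"
proof -
  obtain \<theta>\<^sub>0 where \<theta>\<^sub>0: "\<theta>\<^sub>0 \<in> target_set f fstar"
    using assms(3) unfolding fun_space_def target_set_def by blast
  have "\<exists>\<theta>'\<in>target_set f fstar. model_rank_at f \<theta>' = model_rank f fstar"
    unfolding model_rank_def by (rule LeastI_ex) (use \<theta>\<^sub>0 in blast)
  then have rank_sample: "n_sample_LLR f l fstar (model_rank f fstar)"
    unfolding n_sample_LLR_iff[OF assms(2)] by (metis order_refl)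
  have "optimistic_sample_size f l fstar = model_rank f fstar"
    unfolding optimistic_sample_size_def
  proof (rule Least_equality)
    show "n_sample_LLR f l fstar (model_rank f fstar)"
      by (rule rank_sample)
    show "model_rank f fstar \<le> n" if sample: "n_sample_LLR f l fstar n" for n
    proof -
      obtain \<theta>' where "\<theta>' \<in> target_set f fstar" "model_rank_at f \<theta>' \<le> n"
        using sample unfolding n_sample_LLR_iff[OF assms(2)] by blast
      moreover have "model_rank f fstar \<le> model_rank_at f \<theta>'"
        unfolding model_rank_def by (rule Least_le) (use calculation in blast)
      ultimately show ?thesis by simp
    qed
  qed
  with rank_sample show ?thesis by blast
qed

end
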